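(* The class of weakly right coherent monoids is closed under retracts: if $S$ is a weakly right coherent monoid and $T$ is a monoid that is a retract of $S$, then $T$ is weakly right coherent.
   Context: A monoid $M$ is weakly right coherent if every finitely generated right ideal of $M$ is finitely presented as a right $M$-act (known to be equivalent to $M$ being right ideal Howson and finitely right equated: the intersection of any two finitely generated right ideals is finitely generated, and every $\mathbf{r}_M(a)=\{(s,t)\mid as=at\}$ is finitely generated as a right congruence). A retract of a semigroup $S$ is a subsemigroup $T$ for which there is a homomorphism $\phi:S\to T$ with $t\phi=t$ for all $t\in T$. *)

theory Defs
  imports "HOL-Algebra.Group"
begin

definition right_ideal :: "'a monoid \<Rightarrow> 'a set \<Rightarrow> bool" where
  "right_ideal M I \<longleftrightarrow> I \<subseteq> carrier M \<and>
     (\<forall>x\<in>I. \<forall>s\<in>carrier M. x \<otimes>\<^bsub>M\<^esub> s \<in> I)"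

definition fg_right_ideal :: "'a monoid \<Rightarrow> 'a set \<Rightarrow> bool" where
  "fg_right_ideal M I \<longleftrightarrow> right_ideal M I \<and>
     (\<exists>X. finite X \<and> X \<subseteq> carrier M \<and>
          I = {x \<otimes>\<^bsub>M\<^esub> s | x s. x \<in> X \<and> s \<in> carrier M})"

definition free_act :: "'a monoid \<Rightarrow> nat \<Rightarrow> (nat \<times> 'a) set" where
  "free_act M n = {0..<n} \<times> carrier M"

definition free_action :: "'a monoid \<Rightarrow> nat \<times> 'a \<Rightarrow> 'a \<Rightarrow> nat \<times> 'a" where
  "free_action M x t = (fst x, snd x \<otimes>\<^bsub>M\<^esub> t)"

definition right_congruence_on ::
  "'a monoid \<Rightarrow> 'b set \<Rightarrow> ('b \<Rightarrow> 'a \<Rightarrow> 'b) \<Rightarrow> ('b \<times> 'b) set \<Rightarrow> bool" where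
  "right_congruence_on M A act \<rho> \<longleftrightarrow> equiv A \<rho> \<and>
     (\<forall>x y t. (x, y) \<in> \<rho> \<longrightarrow> t \<in> carrier M \<longrightarrow> (act x t, act y t) \<in> \<rho>)"

definition gen_right_congruence ::
  "'a monoid \<Rightarrow> 'b set \<Rightarrow> ('b \<Rightarrow> 'a \<Rightarrow> 'b) \<Rightarrow> ('b \<times> 'b) set \<Rightarrow> ('b \<times> 'b) set" where
  "gen_right_congruence M A act H =
     \<Inter>{\<rho>. right_congruence_on M A act \<rho> \<and> H \<subseteq> \<rho>}"

text \<open>A right M-act (A, act) is finitely presented if it is isomorphic to F_n / rho
  with F_n free of finite rank n and rho a finitely generated right congruence;
  equivalently there is a surjective act morphism F_n -> A whose kernel is a
  finitely generated right congruence.\<close>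
definition finitely_presented_act ::
  "'a monoid \<Rightarrow> 'b set \<Rightarrow> ('b \<Rightarrow> 'a \<Rightarrow> 'b) \<Rightarrow> bool" where
  "finitely_presented_act M A act \<longleftrightarrow>
     (\<exists>n H f. finite H \<and> H \<subseteq> free_act M n \<times> free_act M n \<and>
        f ` free_act M n = A \<and>
        (\<forall>x\<in>free_act M n. \<forall>t\<in>carrier M. f (free_action M x t) = act (f x) t) \<and>
        {(x, y). x \<in> free_act M n \<and> y \<in> free_act M n \<and> f x = f y}
          = gen_right_congruence M (free_act M n) (free_action M) H)"

definition weakly_right_coherent :: "'a monoid \<Rightarrow> bool" where
  "weakly_right_coherent M \<longleftrightarrow> monoid M \<and>
     (\<forall>I. fg_right_ideal M I \<longrightarrow>
          finitely_presented_act M I (\<lambda>x s. x \<otimes>\<^bsub>M\<^esub> s))"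

definition retract_of :: "'a monoid \<Rightarrow> 'a monoid \<Rightarrow> bool" where
  "retract_of T S \<longleftrightarrow> carrier T \<subseteq> carrier S \<and>
     (\<forall>x\<in>carrier T. \<forall>y\<in>carrier T. x \<otimes>\<^bsub>T\<^esub> y = x \<otimes>\<^bsub>S\<^esub> y) \<and>
     (\<exists>\<phi>. (\<forall>x\<in>carrier S. \<phi> x \<in> carrier T) \<and>
          (\<forall>x\<in>carrier S. \<forall>y\<in>carrier S. \<phi> (x \<otimes>\<^bsub>S\<^esub> y) = \<phi> x \<otimes>\<^bsub>T\<^esub> \<phi> y) \<and>
          (\<forall>t\<in>carrier T. \<phi> t = t))"

end

theory Submission
  imports Defs
begin

text \<open>Let \<open>\<phi>\<close> retract \<open>S\<close> onto \<open>T\<close> and let \<open>I = XT\<close> with \<open>X \<subseteq> T\<close> finite. Then \<open>J = XS\<close> is a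
  finitely generated right ideal of \<open>S\<close> with \<open>I \<subseteq> J\<close> and \<open>\<phi> J = I\<close>. Take a finite
  presentation \<open>f : F\<^sub>n(S) \<rightarrow> J\<close> with relations \<open>H\<close>. Over \<open>T\<close>, send the \<open>i\<close>-th free
  generator to \<open>\<phi> (f (i, 1))\<close> (note that \<open>\<phi>\<close> need not preserve the identity), push \<open>H\<close>
  forward along \<open>\<phi>\<close>, and add for each \<open>i\<close> one relation identifying the generator with the image
  under \<open>\<phi>\<close> of an \<open>f\<close>-preimage of \<open>\<phi> (f (i, 1)) \<in> J\<close>. These finitely many relations
  generate the kernel, because every equality in \<open>I\<close> can be lifted to \<open>J\<close>, derived from
  \<open>H\<close> there, and pushed back down along \<open>\<phi>\<close>.\<close>

lemma gen_right_congruence_subset: "H \<subseteq> gen_right_congruence M A act H"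
  unfolding gen_right_congruence_def by blast

lemma gen_right_congruence_least:
  assumes "right_congruence_on M A act \<rho>" and "H \<subseteq> \<rho>"
  shows "gen_right_congruence M A act H \<subseteq> \<rho>"
  using assms unfolding gen_right_congruence_def by blast

lemma right_congruence_on_gen:
  assumes H: "H \<subseteq> A \<times> A"
    and closed: "\<And>x t. x \<in> A \<Longrightarrow> t \<in> carrier M \<Longrightarrow> act x t \<in> A"
  shows "right_congruence_on M A act (gen_right_congruence M A act H)"
proof -
  let ?F = "{\<rho>. right_congruence_on M A act \<rho> \<and> H \<subseteq> \<rho>}"
  have "A \<times> A \<in> ?F"
    using H closed unfolding right_congruence_on_def equiv_def refl_on_def sym_def trans_def
    by auto
  moreover have members: "equiv A \<rho>" if "\<rho> \<in> ?F" for \<rho>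
    using that unfolding right_congruence_on_def by blast
  ultimately have "equiv A (\<Inter>?F)"
  proof (intro equivI)
    show "\<Inter>?F \<subseteq> A \<times> A" using \<open>A \<times> A \<in> ?F\<close> by (rule Inter_lower)
    show "refl_on A (\<Inter>?F)"
      using members unfolding refl_on_def by (meson InterI equiv_def refl_onD)
    show "sym (\<Inter>?F)"
      using members by (meson InterD InterI equivE symD symI)
    show "trans (\<Inter>?F)"
      using members by (meson InterD InterI equivE transD transI)
  qed
  then show ?thesis
    unfolding right_congruence_on_def gen_right_congruence_def by blast
qed

lemma right_congruence_on_vimage:
  assumes \<rho>: "right_congruence_on N B actB \<rho>"
    and h: "\<And>x. x \<in> A \<Longrightarrow> h x \<in> B"
    and equivariant: "\<And>x s. x \<in> A \<Longrightarrow> s \<in> carrier M \<Longrightarrow>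
        actA x s \<in> A \<and> h (actA x s) = actB (h x) (\<psi> s) \<and> \<psi> s \<in> carrier N"
  shows "right_congruence_on M A actA {(x, y). x \<in> A \<and> y \<in> A \<and> (h x, h y) \<in> \<rho>}"
proof -
  from \<rho> have "equiv B \<rho>"
    and compatible: "\<And>x y t. (x, y) \<in> \<rho> \<Longrightarrow> t \<in> carrier N \<Longrightarrow> (actB x t, actB y t) \<in> \<rho>"
    unfolding right_congruence_on_def by auto
  then have "equiv A {(x, y). x \<in> A \<and> y \<in> A \<and> (h x, h y) \<in> \<rho>}"
    using h unfolding equiv_def refl_on_def sym_def trans_def by blast
  then show ?thesis
    unfolding right_congruence_on_def using equivariant compatible by auto
qed

lemma right_congruence_on_kernel:
  assumes "\<And>x s. x \<in> A \<Longrightarrow> s \<in> carrier M \<Longrightarrow> actA x s \<in> A \<and> f (actA x s) = actB (f x) s"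
  shows "right_congruence_on M A actA {(x, y). x \<in> A \<and> y \<in> A \<and> f x = f y}"
proof -
  have "right_congruence_on M UNIV actB Id"
    unfolding right_congruence_on_def by (simp add: equiv_def refl_on_def sym_def trans_def)
  from right_congruence_on_vimage[OF this, where A = A and h = f and actA = actA and \<psi> = id]
  show ?thesis
    using assms by simp
qed

lemma gen_right_congruence_image:
  assumes \<rho>: "right_congruence_on N B actB \<rho>"
    and h: "\<And>x. x \<in> A \<Longrightarrow> h x \<in> B"
    and equivariant: "\<And>x s. x \<in> A \<Longrightarrow> s \<in> carrier M \<Longrightarrow>
        actA x s \<in> A \<and> h (actA x s) = actB (h x) (\<psi> s) \<and> \<psi> s \<in> carrier N"
    and H: "H \<subseteq> A \<times> A" "\<And>p q. (p, q) \<in> H \<Longrightarrow> (h p, h q) \<in> \<rho>"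
    and pq: "(p, q) \<in> gen_right_congruence M A actA H"
  shows "(h p, h q) \<in> \<rho>"
proof -
  have "right_congruence_on M A actA {(x, y). x \<in> A \<and> y \<in> A \<and> (h x, h y) \<in> \<rho>}"
    using \<rho> h equivariant by (rule right_congruence_on_vimage)
  moreover have "H \<subseteq> {(x, y). x \<in> A \<and> y \<in> A \<and> (h x, h y) \<in> \<rho>}"
    using H by auto
  ultimately show ?thesis
    using gen_right_congruence_least pq by blast
qed

lemma free_action_closed:
  assumes "monoid M" "x \<in> free_act M n" "t \<in> carrier M"
  shows "free_action M x t \<in> free_act M n"
  using assms by (auto simp: free_act_def free_action_def monoid.m_closed)

lemma free_act_morphism_apply:
  assumes "monoid M" "i < n" "s \<in> carrier M"
    and "\<And>x t. x \<in> free_act M n \<Longrightarrow> t \<in> carrier M \<Longrightarrow> f (free_action M x t) = act (f x) t"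
  shows "f (i, s) = act (f (i, \<one>\<^bsub>M\<^esub>)) s"
  using assms(4)[of "(i, \<one>\<^bsub>M\<^esub>)" s] assms(1-3)
  by (simp add: free_act_def free_action_def monoid.one_closed monoid.l_one)

definition right_ideal_generated :: "'a monoid \<Rightarrow> 'a set \<Rightarrow> 'a set" where
  "right_ideal_generated M X = {x \<otimes>\<^bsub>M\<^esub> s | x s. x \<in> X \<and> s \<in> carrier M}"

lemma right_ideal_generated_closed:
  "monoid M \<Longrightarrow> X \<subseteq> carrier M \<Longrightarrow> right_ideal_generated M X \<subseteq> carrier M"
  unfolding right_ideal_generated_def by (auto intro: monoid.m_closed)

lemma fg_right_ideal_iff:
  "fg_right_ideal M I \<longleftrightarrow> right_ideal M I \<and>
     (\<exists>X. finite X \<and> X \<subseteq> carrier M \<and> I = right_ideal_generated M X)"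
  unfolding fg_right_ideal_def right_ideal_generated_def ..

lemma right_ideal_generated_mult_closed:
  assumes "monoid M" "X \<subseteq> carrier M" "y \<in> right_ideal_generated M X" "r \<in> carrier M"
  shows "y \<otimes>\<^bsub>M\<^esub> r \<in> right_ideal_generated M X"
proof -
  interpret monoid M by fact
  obtain x s where "x \<in> X" "s \<in> carrier M" "y = x \<otimes>\<^bsub>M\<^esub> s"
    using assms(3) unfolding right_ideal_generated_def by blast
  moreover have "x \<in> carrier M" using \<open>x \<in> X\<close> assms(2) by blast
  ultimately have "y \<otimes>\<^bsub>M\<^esub> r = x \<otimes>\<^bsub>M\<^esub> (s \<otimes>\<^bsub>M\<^esub> r)"
    using assms(4) by (simp add: m_assoc)
  moreover have "s \<otimes>\<^bsub>M\<^esub> r \<in> carrier M" using \<open>s \<in> carrier M\<close> assms(4) by simp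
  ultimately show ?thesis
    using \<open>x \<in> X\<close> unfolding right_ideal_generated_def by auto
qed

lemma right_ideal_generated_fg:
  assumes "monoid M" "finite X" "X \<subseteq> carrier M"
  shows "fg_right_ideal M (right_ideal_generated M X)"
  using assms(2,3) right_ideal_generated_closed[OF assms(1,3)]
    right_ideal_generated_mult_closed[OF assms(1,3)]
  unfolding fg_right_ideal_iff right_ideal_def by blast

locale monoid_retraction = S: monoid S + T: monoid T
  for S T :: "'a monoid" and \<phi> :: "'a \<Rightarrow> 'a" +
  assumes carrier_subset: "carrier T \<subseteq> carrier S"
    and mult_eq: "x \<in> carrier T \<Longrightarrow> y \<in> carrier T \<Longrightarrow> x \<otimes>\<^bsub>T\<^esub> y = x \<otimes>\<^bsub>S\<^esub> y"
    and retraction_closed: "x \<in> carrier S \<Longrightarrow> \<phi> x \<in> carrier T"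
    and retraction_mult:
      "x \<in> carrier S \<Longrightarrow> y \<in> carrier S \<Longrightarrow> \<phi> (x \<otimes>\<^bsub>S\<^esub> y) = \<phi> x \<otimes>\<^bsub>T\<^esub> \<phi> y"
    and retraction_id: "t \<in> carrier T \<Longrightarrow> \<phi> t = t"

lemma retract_of_imp_monoid_retraction:
  assumes "monoid S" "monoid T" "retract_of T S"
  obtains \<phi> where "monoid_retraction S T \<phi>"
  using assms unfolding retract_of_def monoid_retraction_def monoid_retraction_axioms_def
  by blast

context monoid_retraction
begin

lemma right_ideal_generated_subset:
  assumes "X \<subseteq> carrier T"
  shows "right_ideal_generated T X \<subseteq> right_ideal_generated S X"
  unfolding right_ideal_generated_def using assms carrier_subset mult_eq by blast

lemma retraction_right_ideal_generated:
  assumes "X \<subseteq> carrier T" "y \<in> right_ideal_generated S X"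
  shows "\<phi> y \<in> right_ideal_generated T X"
proof -
  obtain x s where "x \<in> X" "s \<in> carrier S" "y = x \<otimes>\<^bsub>S\<^esub> s"
    using assms(2) unfolding right_ideal_generated_def by blast
  moreover have "x \<in> carrier T" using \<open>x \<in> X\<close> assms(1) by blast
  then have "\<phi> (x \<otimes>\<^bsub>S\<^esub> s) = x \<otimes>\<^bsub>T\<^esub> \<phi> s"
    using \<open>s \<in> carrier S\<close> carrier_subset retraction_mult retraction_id by auto
  ultimately show ?thesis
    unfolding right_ideal_generated_def using retraction_closed by blast
qed

definition free_retraction :: "nat \<times> 'a \<Rightarrow> nat \<times> 'a" where
  "free_retraction p = (fst p, \<phi> (snd p))"

lemma free_retraction_closed: "p \<in> free_act S n \<Longrightarrow> free_retraction p \<in> free_act T n"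
  by (auto simp: free_retraction_def free_act_def retraction_closed)

lemma free_retraction_action:
  assumes "p \<in> free_act S n" "s \<in> carrier S"
  shows "free_retraction (free_action S p s) = free_action T (free_retraction p) (\<phi> s)"
  using assms by (auto simp: free_retraction_def free_act_def free_action_def retraction_mult)

end

locale retraction_presentation = monoid_retraction +
  fixes X :: "'a set" and n :: nat and H :: "((nat \<times> 'a) \<times> (nat \<times> 'a)) set"
    and f :: "nat \<times> 'a \<Rightarrow> 'a"
  assumes generators_subset: "X \<subseteq> carrier T"
    and presentation_relations_subset: "H \<subseteq> free_act S n \<times> free_act S n"
    and presentation_image: "f ` free_act S n = right_ideal_generated S X"
    and presentation_equivariant:
      "x \<in> free_act S n \<Longrightarrow> t \<in> carrier S \<Longrightarrow> f (free_action S x t) = f x \<otimes>\<^bsub>S\<^esub> t"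
    and presentation_kernel:
      "{(x, y). x \<in> free_act S n \<and> y \<in> free_act S n \<and> f x = f y}
         = gen_right_congruence S (free_act S n) (free_action S) H"
begin

definition generator :: "nat \<Rightarrow> 'a" where
  "generator i = \<phi> (f (i, \<one>\<^bsub>S\<^esub>))"

definition generator_lift :: "nat \<Rightarrow> nat \<times> 'a" where
  "generator_lift i = (SOME p. p \<in> free_act S n \<and> f p = generator i)"

definition presentation_map :: "nat \<times> 'a \<Rightarrow> 'a" where
  "presentation_map p = generator (fst p) \<otimes>\<^bsub>T\<^esub> snd p"

definition relations :: "((nat \<times> 'a) \<times> (nat \<times> 'a)) set" where
  "relations = map_prod free_retraction free_retraction ` H
     \<union> (\<lambda>i. ((i, \<one>\<^bsub>T\<^esub>), free_retraction (generator_lift i))) ` {0..<n}"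

lemma presentation_apply:
  assumes "i < n" "s \<in> carrier S"
  shows "f (i, s) = f (i, \<one>\<^bsub>S\<^esub>) \<otimes>\<^bsub>S\<^esub> s"
  using S.monoid_axioms assms presentation_equivariant by (rule free_act_morphism_apply)

lemma presentation_closed: "p \<in> free_act S n \<Longrightarrow> f p \<in> carrier S"
  using presentation_image right_ideal_generated_closed[OF S.monoid_axioms] generators_subset
    carrier_subset by blast

lemma generator_in_ideal: "i < n \<Longrightarrow> generator i \<in> right_ideal_generated T X"
  unfolding generator_def
  using presentation_image generators_subset
  by (intro retraction_right_ideal_generated) (auto simp: free_act_def)

lemma generator_closed: "i < n \<Longrightarrow> generator i \<in> carrier T"
  using generator_in_ideal right_ideal_generated_closed[OF T.monoid_axioms generators_subset]
  by blast

lemma generator_lift_preimage: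
  assumes "i < n"
  shows "generator_lift i \<in> free_act S n \<and> f (generator_lift i) = generator i"
proof -
  have "generator i \<in> f ` free_act S n"
    using right_ideal_generated_subset[OF generators_subset] generator_in_ideal[OF assms]
    unfolding presentation_image by (rule subsetD)
  then obtain p where "p \<in> free_act S n \<and> f p = generator i" by (metis imageE)
  then show ?thesis
    unfolding generator_lift_def by (rule someI)
qed

lemma presentation_map_free_retraction:
  assumes "p \<in> free_act S n"
  shows "presentation_map (free_retraction p) = \<phi> (f p)"
  using assms presentation_apply[of "fst p" "snd p"] presentation_closed[of "(fst p, \<one>\<^bsub>S\<^esub>)"]
  by (auto simp: presentation_map_def free_retraction_def generator_def free_act_def
      retraction_mult)

lemma presentation_map_image: "presentation_map ` free_act T n = right_ideal_generated T X"
proof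
  show "presentation_map ` free_act T n \<subseteq> right_ideal_generated T X"
    using generator_in_ideal right_ideal_generated_mult_closed[OF T.monoid_axioms generators_subset]
    by (auto simp: presentation_map_def free_act_def)
next
  show "right_ideal_generated T X \<subseteq> presentation_map ` free_act T n"
  proof
    fix y assume y: "y \<in> right_ideal_generated T X"
    then obtain p where "p \<in> free_act S n" "f p = y"
      using right_ideal_generated_subset[OF generators_subset] presentation_image
      by (metis imageE subsetD)
    moreover have "\<phi> y = y"
      using y right_ideal_generated_closed[OF T.monoid_axioms generators_subset] retraction_id
      by blast
    ultimately show "y \<in> presentation_map ` free_act T n"
      using presentation_map_free_retraction free_retraction_closed by (metis imageI)
  qed
qed

lemma presentation_map_equivariant:
  "x \<in> free_act T n \<Longrightarrow> t \<in> carrier T \<Longrightarrow>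
     free_action T x t \<in> free_act T n \<and>
     presentation_map (free_action T x t) = presentation_map x \<otimes>\<^bsub>T\<^esub> t"
  using generator_closed
  by (auto simp: presentation_map_def free_action_def free_act_def T.m_assoc)

lemma relations_finite: "finite H \<Longrightarrow> finite relations"
  unfolding relations_def by simp

lemma relations_subset_free: "relations \<subseteq> free_act T n \<times> free_act T n"
proof -
  have "map_prod free_retraction free_retraction ` H \<subseteq> free_act T n \<times> free_act T n"
    using presentation_relations_subset free_retraction_closed by fastforce
  moreover have "((i, \<one>\<^bsub>T\<^esub>), free_retraction (generator_lift i)) \<in> free_act T n \<times> free_act T n"
    if "i < n" for i
    using that generator_lift_preimage free_retraction_closed by (simp add: free_act_def)
  ultimately show ?thesis
    unfolding relations_def by auto
qed

lemma presentation_relations_in_kernel: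
  assumes "(p, q) \<in> H"
  shows "p \<in> free_act S n \<and> q \<in> free_act S n \<and> f p = f q"
proof -
  have "(p, q) \<in> gen_right_congruence S (free_act S n) (free_action S) H"
    using assms gen_right_congruence_subset by blast
  then show ?thesis
    unfolding presentation_kernel[symmetric] by simp
qed

lemma relations_in_kernel:
  assumes "(p, q) \<in> relations"
  shows "presentation_map p = presentation_map q"
  using assms unfolding relations_def
proof (elim UnE imageE)
  fix r assume "r \<in> H" and pq: "(p, q) = map_prod free_retraction free_retraction r"
  obtain p' q' where r: "r = (p', q')" by (rule prod.exhaust)
  with \<open>r \<in> H\<close> have "p' \<in> free_act S n" "q' \<in> free_act S n" "f p' = f q'"
    using presentation_relations_in_kernel by auto
  with pq r show ?thesis
    by (simp add: presentation_map_free_retraction)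
next
  fix i assume "i \<in> {0..<n}" "(p, q) = ((i, \<one>\<^bsub>T\<^esub>), free_retraction (generator_lift i))"
  then show ?thesis
    using generator_lift_preimage[of i] generator_closed[of i] presentation_map_free_retraction
    by (simp add: presentation_map_def retraction_id)
qed

abbreviation relations_congruence :: "((nat \<times> 'a) \<times> (nat \<times> 'a)) set" where
  "relations_congruence \<equiv> gen_right_congruence T (free_act T n) (free_action T) relations"

lemma relations_subset_congruence: "relations \<subseteq> relations_congruence"
  by (rule gen_right_congruence_subset)

lemma right_congruence_on_relations_congruence:
  "right_congruence_on T (free_act T n) (free_action T) relations_congruence"
  using relations_subset_free free_action_closed[OF T.monoid_axioms]
  by (rule right_congruence_on_gen)

lemma free_retraction_gen_right_congruence:
  assumes "(p, q) \<in> gen_right_congruence S (free_act S n) (free_action S) H"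
  shows "(free_retraction p, free_retraction q) \<in> relations_congruence"
proof (rule gen_right_congruence_image[OF right_congruence_on_relations_congruence
      free_retraction_closed _ presentation_relations_subset _ assms])
  fix x s assume "x \<in> free_act S n" "s \<in> carrier S"
  then show "free_action S x s \<in> free_act S n \<and>
      free_retraction (free_action S x s) = free_action T (free_retraction x) (\<phi> s) \<and>
      \<phi> s \<in> carrier T"
    by (simp add: free_action_closed[OF S.monoid_axioms] free_retraction_action retraction_closed)
next
  fix p q assume "(p, q) \<in> H"
  then have "map_prod free_retraction free_retraction (p, q) \<in> relations"
    unfolding relations_def by (intro UnI1 imageI)
  then show "(free_retraction p, free_retraction q) \<in> relations_congruence"
    using relations_subset_congruence by auto
qed

lemma generator_relation:
  assumes "i < n" "t \<in> carrier T"
  shows "((i, t), free_retraction (free_action S (generator_lift i) t)) \<in> relations_congruence"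
proof -
  have "((i, \<one>\<^bsub>T\<^esub>), free_retraction (generator_lift i)) \<in> relations_congruence"
    using assms(1) relations_subset_congruence unfolding relations_def by auto
  then have "(free_action T (i, \<one>\<^bsub>T\<^esub>) t,
      free_action T (free_retraction (generator_lift i)) t) \<in> relations_congruence"
    using assms(2) right_congruence_on_relations_congruence
    unfolding right_congruence_on_def by blast
  moreover have "free_action T (free_retraction (generator_lift i)) t
      = free_retraction (free_action S (generator_lift i) t)"
    using free_retraction_action[of "generator_lift i" n t] generator_lift_preimage[OF assms(1)]
      assms(2) carrier_subset retraction_id by auto
  ultimately show ?thesis
    using assms(2) by (simp add: free_action_def)
qed

lemma presentation_map_kernel:
  "{(x, y). x \<in> free_act T n \<and> y \<in> free_act T n \<and> presentation_map x = presentation_map y}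
     = relations_congruence" (is "?K = _")
proof
  show "relations_congruence \<subseteq> ?K"
  proof (rule gen_right_congruence_least)
    show "right_congruence_on T (free_act T n) (free_action T) ?K"
      by (rule right_congruence_on_kernel) (rule presentation_map_equivariant)
    show "relations \<subseteq> ?K"
      using relations_in_kernel relations_subset_free by auto
  qed
next
  show "?K \<subseteq> relations_congruence"
  proof clarify
    fix i t j u
    assume "(i, t) \<in> free_act T n" "(j, u) \<in> free_act T n"
      and eq: "presentation_map (i, t) = presentation_map (j, u)"
    then have ij: "i < n" "t \<in> carrier T" "j < n" "u \<in> carrier T"
      by (auto simp: free_act_def)
    define p where "p = free_action S (generator_lift i) t"
    define q where "q = free_action S (generator_lift j) u"
    \<comment> \<open>\<open>(i, t) ~ \<phi> p ~ \<phi> q ~ (j, u)\<close>: the outer steps are the extra relations, the middle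
      one is the image under \<open>\<phi>\<close> of a consequence of \<open>H\<close>\<close>
    have "p \<in> free_act S n" "q \<in> free_act S n" "f p = f q"
      using ij eq generator_lift_preimage generator_closed carrier_subset
        free_action_closed[OF S.monoid_axioms] presentation_equivariant
      by (auto simp: p_def q_def presentation_map_def mult_eq subset_iff)
    then have "(free_retraction p, free_retraction q) \<in> relations_congruence"
      using presentation_kernel free_retraction_gen_right_congruence by blast
    moreover have "((i, t), free_retraction p) \<in> relations_congruence"
      "((j, u), free_retraction q) \<in> relations_congruence"
      using ij generator_relation by (simp_all add: p_def q_def)
    moreover have "equiv (free_act T n) relations_congruence"
      using right_congruence_on_relations_congruence unfolding right_congruence_on_def by blast
    ultimately show "((i, t), (j, u)) \<in> relations_congruence"
      unfolding equiv_def by (meson symD transD)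
  qed
qed

lemma right_ideal_generated_finitely_presented:
  assumes "finite H"
  shows "finitely_presented_act T (right_ideal_generated T X) (\<lambda>x s. x \<otimes>\<^bsub>T\<^esub> s)"
  unfolding finitely_presented_act_def
  using relations_finite[OF assms] relations_subset_free presentation_map_image
    presentation_map_equivariant presentation_map_kernel
  by blast

end

lemma (in monoid_retraction) fg_right_ideal_finitely_presented:
  assumes "weakly_right_coherent S" "fg_right_ideal T I"
  shows "finitely_presented_act T I (\<lambda>x s. x \<otimes>\<^bsub>T\<^esub> s)"
proof -
  obtain X where X: "finite X" "X \<subseteq> carrier T" and I: "I = right_ideal_generated T X"
    using assms(2) unfolding fg_right_ideal_iff by blast
  then have "fg_right_ideal S (right_ideal_generated S X)"
    using carrier_subset by (intro right_ideal_generated_fg S.monoid_axioms) auto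
  with assms(1) have "finitely_presented_act S (right_ideal_generated S X) (\<lambda>x s. x \<otimes>\<^bsub>S\<^esub> s)"
    unfolding weakly_right_coherent_def by blast
  then obtain n H f where "finite H" and presentation:
      "H \<subseteq> free_act S n \<times> free_act S n" "f ` free_act S n = right_ideal_generated S X"
      "\<forall>x\<in>free_act S n. \<forall>t\<in>carrier S. f (free_action S x t) = f x \<otimes>\<^bsub>S\<^esub> t"
      "{(x, y). x \<in> free_act S n \<and> y \<in> free_act S n \<and> f x = f y}
         = gen_right_congruence S (free_act S n) (free_action S) H"
    unfolding finitely_presented_act_def by blast
  interpret retraction_presentation S T \<phi> X n H f
    using X(2) presentation by unfold_locales auto
  show ?thesis
    using I right_ideal_generated_finitely_presented[OF \<open>finite H\<close>] by simp
qed

theorem mainTheorem4: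
  fixes S T :: "'a monoid"
  assumes "monoid S" and "weakly_right_coherent S"
    and "monoid T" and "retract_of T S"
  shows "weakly_right_coherent T"
proof -
  obtain \<phi> where "monoid_retraction S T \<phi>"
    using retract_of_imp_monoid_retraction assms(1,3,4) .
  then show ?thesis
    using assms(2,3) monoid_retraction.fg_right_ideal_finitely_presented
    unfolding weakly_right_coherent_def by blast
qed

end
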